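(* Let $q=2^m\geq 4$ with $m$ a positive integer. Let $\delta\in\mathbb{F}_{q^2}$ and $b\in\mathbb{F}_q^*$ satisfy $b^4\,\mathrm{Tr}_{q^2/q}(\delta)=1$. Then the compositional inverse of $$P(x)=b(x^q+x+\delta)^{q(2q+3)/4}+x$$ over $\mathbb{F}_{q^2}$ is $$P^{-1}(x)=x+b\left(\mathrm{Tr}_{q^2/q}(\delta)^{-1}(x^q+x)^2+\delta^{q+1}\mathrm{Tr}_{q^2/q}(\delta)^{-1}+\delta\right)^{q(2q+3)/4}.$$
   Context: $\mathrm{Tr}_{q^2/q}(y)=y+y^q$. The compositional inverse of a permutation polynomial $f$ of $\mathbb{F}_{Q}$ is the unique polynomial $f^{-1}$ (modulo $x^Q-x$) with $f(f^{-1}(c))=f^{-1}(f(c))=c$ for all $c\in\mathbb{F}_Q$; in particular the statement includes that $P$ permutes $\mathbb{F}_{q^2}$. *)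

theory Defs
  imports Main
begin

text \<open>Relative trace from F_{q^2} to F_q, where F_q is the subfield of F_{q^2}
  of elements fixed by y |-> y^q.\<close>
definition trace_q2q :: "nat \<Rightarrow> 'a::field \<Rightarrow> 'a" where
  "trace_q2q q y = y + y ^ q"

end

theory Submission
  imports Defs "HOL-Computational_Algebra.Primes"
begin

(* Write T = Tr(delta), e = q(2q+3)/4 and, for x in F_{q^2}, z = Tr(x) + delta, so that
   Tr(z) = T and P(x) = b z^e + x.  Since 4e = 2q^2 + 3q and z^{q^2} = z, in characteristic 2
     Tr(z^e)^4 = z^2 z^{3q} + z^{2q} z^3 = (z^{q+1})^2 T,
   and b in F_q with b^4 T = 1 gives Tr(b z^e)^2 = z^{q+1}.  Hence y = P(x) satisfies
     Tr(y)^2 = z^{q+1} + Tr(x)^2 = Tr(x) T + delta^{q+1},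
   an equation the formula for P^{-1} solves for z; then P^{-1}(y) = y + b z^e = x.
   A left inverse of a self-map of a finite set is a two-sided inverse. *)

(* The library's finite_field_power_card_eq_same needs the sort finite_field, which a type
   variable of sort {field, finite} does not have. *)
lemma power_card_eq_self:
  fixes x :: "'a::{field,finite}"
  shows "x ^ card (UNIV :: 'a set) = x"
proof (cases "x = 0")
  case False
  have "(\<Prod>y\<in>UNIV-{0}. x * y) = (\<Prod>y\<in>UNIV-{0::'a}. y)"
    by (rule prod.reindex_bij_witness[of _ "\<lambda>y. y / x" "\<lambda>y. x * y"]) (use False in auto)
  then have "x ^ (card (UNIV :: 'a set) - 1) = 1"
    by (simp add: prod.distrib card_Diff_singleton)
  moreover have "card (UNIV :: 'a set) = Suc (card (UNIV :: 'a set) - 1)"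
    using finite_UNIV_card_ge_0[where ?'a = 'a] by simp
  ultimately show ?thesis
    by (metis power_Suc mult_1_right)
qed (simp add: finite_UNIV_card_ge_0)

lemma CHAR_eq_2_if_even_card:
  assumes "even (card (UNIV :: 'a::{field,finite} set))"
  shows "CHAR('a) = 2"
proof (rule CHAR_eq_posI)
  have "(-1::'a) = 1"
    using power_card_eq_self[of "-1::'a"] assms by simp
  then show "of_nat 2 = (0::'a)"
    by (simp add: add_eq_0_iff2)
  show "of_nat n \<noteq> (0::'a)" if "0 < n" "n < 2" for n :: nat
    using that by (auto simp: less_2_cases_iff)
qed simp

lemma add_self_CHAR_2:
  fixes x :: "'a::ring_1"
  assumes "CHAR('a) = 2"
  shows "x + x = 0"
  using minus_CHAR_2[OF assms, of x x] by simp

lemma power2_add_CHAR_2: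
  fixes x y :: "'a::comm_ring_1"
  assumes "CHAR('a) = 2"
  shows "(x + y) ^ 2 = x ^ 2 + y ^ 2"
  by (rule freshmans_dream) (simp_all add: assms)

lemma power2_eq_iff_CHAR_2:
  fixes x y :: "'a::idom"
  assumes "CHAR('a) = 2"
  shows "x ^ 2 = y ^ 2 \<longleftrightarrow> x = y"
proof
  assume "x ^ 2 = y ^ 2"
  then have "(x + y) ^ 2 = 0"
    using power2_add_CHAR_2[OF assms, of x y] add_self_CHAR_2[OF assms, of "y ^ 2"] by simp
  then have "x + y = 0"
    by simp
  then show "x = y"
    by (simp add: add_eq_0_iff2 uminus_CHAR_2[OF assms])
qed simp

context
  fixes q k :: nat
  assumes q_eq: "q = 2 ^ k"
    and card_eq: "card (UNIV :: 'a::{field,finite} set) = q ^ 2"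
begin

lemma CHAR_eq_2: "CHAR('a) = 2"
proof (rule CHAR_eq_2_if_even_card)
  have "k \<noteq> 0"
  proof
    assume "k = 0"
    then have "card (UNIV :: 'a set) = 1"
      using card_eq q_eq by simp
    then obtain c :: 'a where "UNIV = {c}"
      by (rule card_1_singletonE)
    then show False
      by (metis singletonD UNIV_I zero_neq_one)
  qed
  then show "even (card (UNIV :: 'a set))"
    using card_eq q_eq by simp
qed

lemma power_q_add: "(x + y) ^ q = x ^ q + y ^ q" for x y :: 'a
  by (rule freshmans_dream') (simp_all add: CHAR_eq_2 q_eq)

lemma power_q_power_q: "(x ^ q) ^ q = x" for x :: 'a
  using power_card_eq_self[of x] card_eq by (simp add: power_mult[symmetric] power2_eq_square)

lemma trace_q2q_add: "trace_q2q q (x + y) = trace_q2q q x + trace_q2q q y" for x y :: 'a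
  by (simp add: trace_q2q_def power_q_add algebra_simps)

lemma trace_q2q_mult_fixed:
  fixes c y :: 'a
  assumes "c ^ q = c"
  shows "trace_q2q q (c * y) = c * trace_q2q q y"
  by (simp add: trace_q2q_def power_mult_distrib assms algebra_simps)

lemma trace_q2q_power_q: "trace_q2q q y ^ q = trace_q2q q y" for y :: 'a
  by (simp add: trace_q2q_def power_q_add power_q_power_q add.commute)

lemma trace_q2q_trace_q2q: "trace_q2q q (trace_q2q q y) = 0" for y :: 'a
  by (simp add: trace_q2q_def trace_q2q_power_q[unfolded trace_q2q_def] add_self_CHAR_2 CHAR_eq_2)

lemma power4_trace_q2q_power:
  fixes z :: 'a
  assumes "4 dvd q"
  shows "trace_q2q q (z ^ (q * (2 * q + 3) div 4)) ^ 4 = (z ^ (q + 1)) ^ 2 * trace_q2q q z"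
proof -
  define w where "w = z ^ (q * (2 * q + 3) div 4)"
  have "q * (2 * q + 3) div 4 * 4 = q * q * 2 + q * 3"
    using assms by (elim dvdE) (simp add: algebra_simps)
  then have "w ^ 4 = z ^ (q * q * 2 + q * 3)"
    unfolding w_def by (simp flip: power_mult)
  also have "\<dots> = ((z ^ q) ^ q) ^ 2 * (z ^ q) ^ 3"
    by (simp only: power_add power_mult)
  finally have w4: "w ^ 4 = z ^ 2 * (z ^ q) ^ 3"
    by (simp only: power_q_power_q)
  have "(w ^ q) ^ 4 = (w ^ 4) ^ q"
    by (simp only: power_mult[symmetric] mult.commute)
  also have "\<dots> = (z ^ q) ^ 2 * ((z ^ q) ^ q) ^ 3"
    unfolding w4 power_mult_distrib by (simp only: power_mult[symmetric] mult_ac)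
  finally have wq4: "(w ^ q) ^ 4 = (z ^ q) ^ 2 * z ^ 3"
    by (simp only: power_q_power_q)
  have "trace_q2q q w ^ 4 = w ^ 4 + (w ^ q) ^ 4"
    unfolding trace_q2q_def by (rule freshmans_dream'[where n = 2]) (simp_all add: CHAR_eq_2)
  also have "\<dots> = (z ^ (q + 1)) ^ 2 * trace_q2q q z"
    unfolding w4 wq4 trace_q2q_def by (simp add: power2_eq_square power3_eq_cube algebra_simps)
  finally show ?thesis unfolding w_def .
qed

lemma power2_trace_q2q_scaled_power:
  fixes b z :: 'a
  assumes "4 dvd q" and "b ^ q = b" and "b ^ 4 * trace_q2q q z = 1"
  shows "trace_q2q q (b * z ^ (q * (2 * q + 3) div 4)) ^ 2 = z ^ (q + 1)"
proof -
  have "(trace_q2q q (b * z ^ (q * (2 * q + 3) div 4)) ^ 2) ^ 2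
      = b ^ 4 * trace_q2q q (z ^ (q * (2 * q + 3) div 4)) ^ 4"
    by (simp add: trace_q2q_mult_fixed assms(2) power_mult_distrib flip: power_mult)
  also have "\<dots> = (z ^ (q + 1)) ^ 2"
    by (simp add: power4_trace_q2q_power assms(1,3) mult.left_commute[of "b ^ 4"])
  finally show ?thesis
    using power2_eq_iff_CHAR_2[OF CHAR_eq_2] by blast
qed

lemma power2_trace_q2q_image:
  fixes b \<delta> x :: 'a
  assumes "4 dvd q" and "b ^ q = b" and "b ^ 4 * trace_q2q q \<delta> = 1"
  shows "trace_q2q q (b * (trace_q2q q x + \<delta>) ^ (q * (2 * q + 3) div 4) + x) ^ 2
    = trace_q2q q x * trace_q2q q \<delta> + \<delta> ^ (q + 1)"
proof -
  define t where "t = trace_q2q q x"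
  define z where "z = t + \<delta>"
  have "b ^ 4 * trace_q2q q z = 1"
    using assms(3) by (simp add: z_def t_def trace_q2q_add trace_q2q_trace_q2q)
  then have trace_square: "trace_q2q q (b * z ^ (q * (2 * q + 3) div 4)) ^ 2 = z ^ (q + 1)"
    by (rule power2_trace_q2q_scaled_power[OF assms(1,2)])
  have "t ^ q = t"
    unfolding t_def by (rule trace_q2q_power_q)
  then have norm_z: "z ^ (q + 1) = t * trace_q2q q \<delta> + \<delta> ^ (q + 1) + t ^ 2"
    by (simp add: z_def power_q_add trace_q2q_def power2_eq_square algebra_simps)
  have "trace_q2q q (b * z ^ (q * (2 * q + 3) div 4) + x) ^ 2
      = trace_q2q q (b * z ^ (q * (2 * q + 3) div 4)) ^ 2 + t ^ 2"
    by (simp add: trace_q2q_add power2_add_CHAR_2 CHAR_eq_2 t_def)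
  also have "\<dots> = t * trace_q2q q \<delta> + \<delta> ^ (q + 1) + (t ^ 2 + t ^ 2)"
    by (simp only: trace_square norm_z add.assoc)
  also have "\<dots> = t * trace_q2q q \<delta> + \<delta> ^ (q + 1)"
    by (simp add: add_self_CHAR_2 CHAR_eq_2)
  finally show ?thesis
    unfolding z_def t_def .
qed

lemma left_inverse_formula:
  fixes b \<delta> x :: 'a
  assumes "4 dvd q" and "b ^ q = b" and "b ^ 4 * trace_q2q q \<delta> = 1"
  defines "e \<equiv> q * (2 * q + 3) div 4"
  defines "y \<equiv> b * (x ^ q + x + \<delta>) ^ e + x"
  shows "y + b * (inverse (trace_q2q q \<delta>) * (y ^ q + y) ^ 2
    + \<delta> ^ (q + 1) * inverse (trace_q2q q \<delta>) + \<delta>) ^ e = x"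
proof -
  define T where "T = trace_q2q q \<delta>"
  define t where "t = x ^ q + x"
  define d where "d = \<delta> ^ (q + 1) * inverse T"
  have "T \<noteq> 0"
    using assms(3) by (auto simp: T_def)
  have "(y ^ q + y) ^ 2 = t * T + \<delta> ^ (q + 1)"
    using power2_trace_q2q_image[OF assms(1-3), of x]
    by (simp add: y_def e_def t_def T_def trace_q2q_def add.commute add.left_commute)
  then have "inverse T * (y ^ q + y) ^ 2 + d + \<delta> = t + (d + d) + \<delta>"
    using \<open>T \<noteq> 0\<close> by (simp add: d_def field_simps)
  also have "\<dots> = x ^ q + x + \<delta>"
    by (simp add: t_def add_self_CHAR_2 CHAR_eq_2)
  finally have "inverse T * (y ^ q + y) ^ 2 + d + \<delta> = x ^ q + x + \<delta>" .
  moreover have "y + b * (x ^ q + x + \<delta>) ^ e = x"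
    using add_self_CHAR_2[OF CHAR_eq_2, of "b * (x ^ q + x + \<delta>) ^ e"]
    by (simp add: y_def add.commute add.left_commute)
  ultimately show ?thesis
    by (simp add: T_def d_def)
qed

end

theorem theorem3p3:
  fixes m :: nat and q :: nat and \<delta> b :: "'a::{field,finite}"
    and P Pinv :: "'a \<Rightarrow> 'a"
  assumes "m \<ge> 1" and "q = 2 ^ m" and "q \<ge> 4"
    and "card (UNIV :: 'a set) = q ^ 2"
    and "b ^ q = b" and "b \<noteq> 0"
    and "b ^ 4 * trace_q2q q \<delta> = 1"
    and "\<And>x. P x = b * (x ^ q + x + \<delta>) ^ (q * (2 * q + 3) div 4) + x"
    and "\<And>x. Pinv x = x + b * (inverse (trace_q2q q \<delta>) * (x ^ q + x) ^ 2
               + \<delta> ^ (q + 1) * inverse (trace_q2q q \<delta>) + \<delta>) ^ (q * (2 * q + 3) div 4)"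
  shows "bij P \<and> (\<forall>c. P (Pinv c) = c \<and> Pinv (P c) = c)"
proof -
  \<comment> \<open>The hypotheses \<open>m \<ge> 1\<close> and \<open>b \<noteq> 0\<close> are implied by the others and not needed.\<close>
  have "(2::nat) ^ 2 \<le> 2 ^ m"
    using assms(2,3) by simp
  then have "2 \<le> m"
    by (rule power_le_imp_le_exp[rotated]) simp
  then have "4 dvd q"
    using assms(2) le_imp_power_dvd[of 2 m 2] by simp
  have left_inverse: "Pinv (P x) = x" for x
    using left_inverse_formula[OF assms(2,4) \<open>4 dvd q\<close> assms(5,7), of x] by (simp add: assms(8,9))
  then have "inj P"
    by (rule inj_on_inverseI)
  then have "surj P"
    by (simp add: finite_UNIV_inj_surj)
  then have "P (Pinv c) = c" for c
    using left_inverse by (metis surjD)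
  with \<open>inj P\<close> \<open>surj P\<close> left_inverse show ?thesis
    by (simp add: bij_def)
qed

end
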